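(* The group $\mathbb{Z}^2$ admits no context-free-preimage left-order. In particular, if a finitely generated group $G$ admits a context-free-preimage left-order, then $G$ does not contain a subgroup isomorphic to $\mathbb{Z}^2$.
   Context: A finite generating set of a group $G$ is a finite set $X$ with a surjective monoid homomorphism $\pi\colon X^*\to G$. A left-order $\prec$ on $G$ with positive cone $P=\{g:1\prec g\}$ is a context-free-preimage left-order if, for a finite generating set $(X,\pi)$ of $G$, the full preimage $\pi^{-1}(P)\subseteq X^*$ is a context-free language (accepted by a nondeterministic pushdown automaton). *)

theory Defs
  imports "HOL-Algebra.Algebra"
begin

text \<open>A transition (q, a, Z, q', beta) means: in state q, reading a (None = epsilon move)
  with Z on top of the stack, go to state q' and replace Z by the word beta.\<close>

type_synonym 'x pda_trans = "(nat \<times> 'x option \<times> nat \<times> nat \<times> nat list) set"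

definition pda_step ::
  "'x pda_trans \<Rightarrow> (nat \<times> 'x list \<times> nat list) \<Rightarrow> (nat \<times> 'x list \<times> nat list) \<Rightarrow> bool" where
  "pda_step \<delta> c c' \<longleftrightarrow>
     (\<exists>q w Z rest a q' beta w'.
        c = (q, w, Z # rest) \<and> (q, a, Z, q', beta) \<in> \<delta> \<and>
        c' = (q', w', beta @ rest) \<and>
        ((a = None \<and> w' = w) \<or> (\<exists>x. a = Some x \<and> w = x # w')))"

definition pda_accepts :: "'x pda_trans \<Rightarrow> nat \<Rightarrow> nat \<Rightarrow> nat set \<Rightarrow> 'x list \<Rightarrow> bool" where
  "pda_accepts \<delta> q0 Z0 F w \<longleftrightarrow>
     (\<exists>f \<gamma>. f \<in> F \<and> (pda_step \<delta>)\<^sup>*\<^sup>* (q0, w, [Z0]) (f, [], \<gamma>))"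

definition context_free :: "'x set \<Rightarrow> 'x list set \<Rightarrow> bool" where
  "context_free A L \<longleftrightarrow> finite A \<and>
     (\<exists>(trans :: 'x pda_trans) q0 Z0 fin. finite trans \<and> finite fin \<and>
        (\<forall>t \<in> trans. set_option (fst (snd t)) \<subseteq> A) \<and>
        L = {w \<in> lists A. pda_accepts trans q0 Z0 fin w})"

definition word_eval :: "('g, 'b) monoid_scheme \<Rightarrow> ('x \<Rightarrow> 'g) \<Rightarrow> 'x list \<Rightarrow> 'g" where
  "word_eval G f w = foldr (\<lambda>x acc. f x \<otimes>\<^bsub>G\<^esub> acc) w \<one>\<^bsub>G\<^esub>"

definition finite_generating_set :: "('g, 'b) monoid_scheme \<Rightarrow> 'x set \<Rightarrow> ('x \<Rightarrow> 'g) \<Rightarrow> bool" where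
  "finite_generating_set G A f \<longleftrightarrow> finite A \<and> f ` A \<subseteq> carrier G \<and>
     (\<forall>g \<in> carrier G. \<exists>w \<in> lists A. word_eval G f w = g)"

definition finitely_generated :: "('g, 'b) monoid_scheme \<Rightarrow> bool" where
  "finitely_generated G \<longleftrightarrow> (\<exists>(A :: nat set) f. finite_generating_set G A f)"

definition left_order :: "('g, 'b) monoid_scheme \<Rightarrow> ('g \<Rightarrow> 'g \<Rightarrow> bool) \<Rightarrow> bool" where
  "left_order G lt \<longleftrightarrow>
     (\<forall>a \<in> carrier G. \<not> lt a a) \<and>
     (\<forall>a \<in> carrier G. \<forall>b \<in> carrier G. \<forall>c \<in> carrier G. lt a b \<and> lt b c \<longrightarrow> lt a c) \<and>
     (\<forall>a \<in> carrier G. \<forall>b \<in> carrier G. a \<noteq> b \<longrightarrow> lt a b \<or> lt b a) \<and>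
     (\<forall>g \<in> carrier G. \<forall>a \<in> carrier G. \<forall>b \<in> carrier G.
         lt a b \<longrightarrow> lt (g \<otimes>\<^bsub>G\<^esub> a) (g \<otimes>\<^bsub>G\<^esub> b))"

definition positive_cone :: "('g, 'b) monoid_scheme \<Rightarrow> ('g \<Rightarrow> 'g \<Rightarrow> bool) \<Rightarrow> 'g set" where
  "positive_cone G lt = {g \<in> carrier G. lt \<one>\<^bsub>G\<^esub> g}"

definition cf_preimage_left_order :: "('g, 'b) monoid_scheme \<Rightarrow> ('g \<Rightarrow> 'g \<Rightarrow> bool) \<Rightarrow> bool" where
  "cf_preimage_left_order G lt \<longleftrightarrow> left_order G lt \<and>
     (\<exists>(A :: nat set) f. finite_generating_set G A f \<and>
        context_free A {w \<in> lists A. word_eval G f w \<in> positive_cone G lt})"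

definition Z2 :: "(int \<times> int) monoid" where
  "Z2 = \<lparr>carrier = UNIV, monoid.mult = (\<lambda>(a, b) (c, d). (a + c, b + d)), monoid.one = (0, 0)\<rparr>"

end

(* Context-free languages admit pumping and are closed under inverse homomorphisms. If G has a
   context-free preimage of its positive cone and contains Z^2, then for nonzero a, b in Z^2 the
   lattice paths (words over East, West, North, South) whose end point (i, k) satisfies
   i a + k b > 0 form a context-free language. Pumping a long such path down and up subtracts
   and adds the end point e of a short factor, and both results must stay positive.
   This fails for suitable a, b. If the order of Z^2 has a least positive element s, some u lies
   above all multiples of s, the order on Zu + Zs is lexicographic, and the path
   East^m South^m West^m North^(m+1) is a counterexample. Otherwise below finitely many positive
   elements there is always another one, giving a long positive g such that g - e and g + e are
   never both positive for short nonzero e; a monotone path to g is a counterexample. *)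
theory Submission
  imports Defs "HOL-Library.Sublist" "HOL-Library.Countable" "HOL-Library.Product_Plus"
    "HOL-Library.Product_Lexorder"
begin

section \<open>Pushdown automata as grammars\<close>

definition list_of_option :: "'a option \<Rightarrow> 'a list" where
  "list_of_option a = (case a of None \<Rightarrow> [] | Some x \<Rightarrow> [x])"

lemma list_of_option_simps [simp]:
  "list_of_option None = []" "list_of_option (Some x) = [x]"
  by (simp_all add: list_of_option_def)

lemma length_list_of_option_le: "length (list_of_option a) \<le> 1"
  by (cases a) auto

lemma pda_stepI:
  assumes "(q, a, Z, q', \<beta>) \<in> \<delta>"
  shows "pda_step \<delta> (q, list_of_option a @ w, Z # rest) (q', w, \<beta> @ rest)"
  using assms unfolding pda_step_def by (cases a) fastforce+

lemma pda_stepE: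
  assumes "pda_step \<delta> (q, w, st) c'"
  obtains Z rest a q' \<beta> w' where "st = Z # rest" "(q, a, Z, q', \<beta>) \<in> \<delta>"
    "w = list_of_option a @ w'" "c' = (q', w', \<beta> @ rest)"
  using assms unfolding pda_step_def by fastforce

text \<open>The triple construction turning a PDA into a grammar. With qo = Some q: started in state p
  with \<gamma> on top of the stack, the PDA can read w and pop exactly \<gamma>, ending in state q.
  With qo = None: it can read w and reach a final state without touching the stack below \<gamma>.\<close>
inductive pda_derives ::
  "'x pda_trans \<Rightarrow> nat set \<Rightarrow> nat \<Rightarrow> nat list \<Rightarrow> nat option \<Rightarrow> 'x list \<Rightarrow> bool"
  for \<delta> F where
  pop_nil: "pda_derives \<delta> F p [] (Some p) []"
| final: "p \<in> F \<Longrightarrow> pda_derives \<delta> F p \<gamma> None []"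
| pop: "(p, a, Z, q1, \<beta>) \<in> \<delta> \<Longrightarrow> pda_derives \<delta> F q1 \<beta> (Some q') w1 \<Longrightarrow>
    pda_derives \<delta> F q' \<gamma> qo w2 \<Longrightarrow> pda_derives \<delta> F p (Z # \<gamma>) qo (list_of_option a @ w1 @ w2)"
| push: "(p, a, Z, q1, \<beta>) \<in> \<delta> \<Longrightarrow> pda_derives \<delta> F q1 \<beta> None w \<Longrightarrow>
    pda_derives \<delta> F p (Z # \<gamma>) None (list_of_option a @ w)"

lemma pda_derives_sound:
  assumes "pda_derives \<delta> F p \<gamma> qo w"
  shows "case qo of
      Some q \<Rightarrow> (pda_step \<delta>)\<^sup>*\<^sup>* (p, w @ r, \<gamma> @ st) (q, r, st)
    | None \<Rightarrow> (\<exists>f \<gamma>'. f \<in> F \<and> (pda_step \<delta>)\<^sup>*\<^sup>* (p, w @ r, \<gamma> @ st) (f, r, \<gamma>'))"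
  using assms
proof (induction arbitrary: r st rule: pda_derives.induct)
  case (pop p a Z q1 \<beta> q' w1 \<gamma> qo w2)
  have "pda_step \<delta> (p, (list_of_option a @ w1 @ w2) @ r, (Z # \<gamma>) @ st)
      (q1, w1 @ w2 @ r, \<beta> @ \<gamma> @ st)"
    using pda_stepI[OF pop.hyps(1)] by simp
  moreover have "(pda_step \<delta>)\<^sup>*\<^sup>* (q1, w1 @ w2 @ r, \<beta> @ \<gamma> @ st) (q', w2 @ r, \<gamma> @ st)"
    using pop.IH(1)[of "w2 @ r" "\<gamma> @ st"] by simp
  ultimately have "(pda_step \<delta>)\<^sup>*\<^sup>* (p, (list_of_option a @ w1 @ w2) @ r, (Z # \<gamma>) @ st)
      (q', w2 @ r, \<gamma> @ st)"
    by (rule converse_rtranclp_into_rtranclp)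
  with pop.IH(2)[of r st] show ?case
    by (cases qo) (auto intro: rtranclp_trans)
next
  case (push p a Z q1 \<beta> w \<gamma>)
  have "pda_step \<delta> (p, (list_of_option a @ w) @ r, (Z # \<gamma>) @ st) (q1, w @ r, \<beta> @ \<gamma> @ st)"
    using pda_stepI[OF push.hyps(1)] by simp
  with push.IH[of r "\<gamma> @ st"] show ?case
    by (auto intro: converse_rtranclp_into_rtranclp)
qed auto

lemma pda_derives_final_split:
  assumes "pda_derives \<delta> F p (\<beta> @ \<gamma>) None w"
  shows "pda_derives \<delta> F p \<beta> None w \<or>
    (\<exists>q w1 w2. w = w1 @ w2 \<and> pda_derives \<delta> F p \<beta> (Some q) w1 \<and> pda_derives \<delta> F q \<gamma> None w2)"
  using assms
proof (induction p "\<beta> @ \<gamma>" "None :: nat option" w arbitrary: \<beta> rule: pda_derives.induct)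
  case (final p)
  then show ?case by (auto intro: pda_derives.final)
next
  case (pop p a Z q1 \<beta>' q' w1 \<gamma>' w2)
  show ?case
  proof (cases \<beta>)
    case Nil
    then show ?thesis
      using pda_derives.pop_nil pda_derives.pop[OF pop.hyps(1-3)] pop.hyps(5) by fastforce
  next
    case (Cons Y \<beta>2)
    with pop.hyps(5) have "Y = Z" "\<gamma>' = \<beta>2 @ \<gamma>" by auto
    with pop.hyps(4)[of \<beta>2] Cons show ?thesis
      using pda_derives.pop[OF pop.hyps(1,2)] by (fastforce simp del: append_assoc)
  qed
next
  case (push p a Z q1 \<beta>' w \<gamma>')
  then show ?case
    using pda_derives.pop_nil pda_derives.push[OF push.hyps(1,2)] by (cases \<beta>) fastforce+
qed

lemma pda_derives_complete:
  assumes "(pda_step \<delta>)\<^sup>*\<^sup>* (p, w, \<gamma>) (f, [], \<gamma>')" "f \<in> F"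
  shows "pda_derives \<delta> F p \<gamma> None w"
  using assms(1)
proof (induction "(p, w, \<gamma>)" arbitrary: p w \<gamma> rule: converse_rtranclp_induct)
  case base
  then show ?case using assms(2) by (auto intro: pda_derives.final)
next
  case (step c)
  from step.hyps(1) obtain Z rest a q' \<beta> w' where
    s: "\<gamma> = Z # rest" "(p, a, Z, q', \<beta>) \<in> \<delta>" "w = list_of_option a @ w'" "c = (q', w', \<beta> @ rest)"
    by (rule pda_stepE)
  from pda_derives_final_split[OF step.hyps(3)[OF s(4)]] show ?case
    using pda_derives.push[OF s(2)] pda_derives.pop[OF s(2)] s(1,3) by auto
qed

lemma pda_accepts_iff_derives: "pda_accepts \<delta> q0 Z0 F w \<longleftrightarrow> pda_derives \<delta> F q0 [Z0] None w"
  using pda_derives_complete pda_derives_sound[of \<delta> F q0 "[Z0]" None w "[]" "[]"]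
  unfolding pda_accepts_def by auto

section \<open>A pumping lemma\<close>

lemma three_pow_less_half:
  assumes "3 ^ Suc k < n" "n \<le> 1 + 2 * m"
  shows "3 ^ k < (m :: nat)"
proof -
  have "3 * 3 ^ k < n" "1 \<le> (3::nat) ^ k" using assms(1) by simp_all
  then show ?thesis using assms(2) by linarith
qed

lemma concat_replicate_append_comm:
  "concat (replicate i y) @ y = y @ concat (replicate i y)"
  by (induction i) auto

lemma context_compose:
  assumes "\<forall>t\<in>A. u @ t @ z \<in> B" "\<forall>t\<in>C. u' @ t @ z' \<in> A"
  shows "\<forall>t\<in>C. (u @ u') @ t @ (z' @ z) \<in> B"
proof
  fix t assume "t \<in> C"
  then have "u @ (u' @ t @ z') @ z \<in> B" using assms by blast
  then show "(u @ u') @ t @ (z' @ z) \<in> B" by simp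
qed

definition decomposes :: "'n set \<Rightarrow> ('n \<Rightarrow> 'x list set) \<Rightarrow> 'x list set \<Rightarrow> 'x list \<Rightarrow> bool" where
  "decomposes labels lang A x \<longleftrightarrow> (\<exists>M\<in>labels. \<exists>u x' z. x = u @ x' @ z \<and> u @ z \<noteq> [] \<and>
     length x \<le> 1 + 2 * length x' \<and> x' \<in> lang M \<and> (\<forall>t\<in>lang M. u @ t @ z \<in> A))"

lemma decomposesI:
  assumes "M \<in> labels" "x' \<in> lang M" "\<forall>t\<in>lang M. u @ t @ z \<in> A" "u @ z \<noteq> []"
    "length (u @ x' @ z) \<le> 1 + 2 * length x'"
  shows "decomposes labels lang A (u @ x' @ z)"
  unfolding decomposes_def using assms by blast

lemma decomposes_mono: "decomposes labels lang A x \<Longrightarrow> A \<subseteq> B \<Longrightarrow> decomposes labels lang B x"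
  unfolding decomposes_def by blast

lemma decomposes_through:
  assumes "M \<in> labels" "x' \<in> lang M" "\<forall>t\<in>lang M. u @ t @ z \<in> A"
    "length (u @ x' @ z) \<le> 1 + 2 * length x'" "1 < length (u @ x' @ z)"
    "1 < length x' \<Longrightarrow> decomposes labels lang (lang M) x'"
  shows "decomposes labels lang A (u @ x' @ z)"
proof (cases "u @ z = []")
  case True
  then have "lang M \<subseteq> A" using assms(3) by auto
  then show ?thesis using decomposes_mono[OF assms(6)] assms(5) True by simp
next
  case False
  show ?thesis using decomposesI[where lang = lang, OF assms(1-3) False assms(4)] .
qed

text \<open>Abstracts a grammar whose productions have at most one terminal and two nonterminals on
  the right, which is where the bound 1 + 2 * length x' comes from.\<close>
locale descent_system =
  fixes labels :: "'n set" and lang :: "'n \<Rightarrow> 'x list set"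
  assumes finite_labels: "finite labels"
    and descend: "N \<in> labels \<Longrightarrow> x \<in> lang N \<Longrightarrow> 1 < length x \<Longrightarrow>
      decomposes labels lang (lang N) x"
begin

definition pumpable :: "'n \<Rightarrow> 'x list \<Rightarrow> bool" where
  "pumpable R x \<longleftrightarrow> (\<exists>M u v w y z. x = u @ v @ w @ y @ z \<and> v @ y \<noteq> [] \<and> w \<in> lang M \<and>
     (\<forall>t\<in>lang M. u @ t @ z \<in> lang R) \<and> (\<forall>t\<in>lang M. v @ t @ y \<in> lang M))"

lemma descend_to_window:
  assumes "N \<in> labels" "x \<in> lang N" "3 ^ k < length x"
  shows "\<exists>M\<in>labels. \<exists>u x' z. x = u @ x' @ z \<and> x' \<in> lang M \<and> 3 ^ k < length x' \<and>
    length x' \<le> 3 ^ Suc k \<and> (\<forall>t\<in>lang M. u @ t @ z \<in> lang N)"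
  using assms
proof (induction "length x" arbitrary: N x rule: less_induct)
  case less
  show ?case
  proof (cases "length x \<le> 3 ^ Suc k")
    case True
    show ?thesis
      by (rule bexI[OF _ less.prems(1)], rule exI[of _ "[]"], rule exI[of _ x],
          rule exI[of _ "[]"]) (use True less.prems in simp)
  next
    case False
    moreover have "(1::nat) \<le> 3 ^ Suc k" by simp
    ultimately have "1 < length x" by linarith
    obtain M u x' z where M: "M \<in> labels" "x = u @ x' @ z" "u @ z \<noteq> []"
      "length x \<le> 1 + 2 * length x'" "x' \<in> lang M" "\<forall>t\<in>lang M. u @ t @ z \<in> lang N"
      using descend[OF less.prems(1,2) \<open>1 < length x\<close>] unfolding decomposes_def
      by (elim bexE exE conjE) (rule that)
    have "3 ^ k < length x'"
      using three_pow_less_half[of k "length x" "length x'"] False M(4) by linarith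
    moreover have "length x' < length x" using M(2,3) by simp
    ultimately obtain M' u' x'' z' where M': "M' \<in> labels" "x' = u' @ x'' @ z'" "x'' \<in> lang M'"
      "3 ^ k < length x''" "length x'' \<le> 3 ^ Suc k" "\<forall>t\<in>lang M'. u' @ t @ z' \<in> lang M"
      using less.hyps M(1,5) by (metis (no_types, lifting))
    have ctx: "\<forall>t\<in>lang M'. (u @ u') @ t @ (z' @ z) \<in> lang N"
      using context_compose[OF M(6) M'(6)] .
    show ?thesis
      by (rule bexI[OF _ M'(1)], rule exI[of _ "u @ u'"], rule exI[of _ x''],
          rule exI[of _ "z' @ z"]) (use ctx M(2) M' in simp)
  qed
qed

definition passed_labels :: "'n \<Rightarrow> 'n set \<Rightarrow> 'n \<Rightarrow> 'x list \<Rightarrow> 'x list \<Rightarrow> bool" where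
  "passed_labels R V N u z \<longleftrightarrow> (\<forall>M\<in>V. \<exists>u' v y z'. u = u' @ v \<and> z = y @ z' \<and> v @ y \<noteq> [] \<and>
     (\<forall>t\<in>lang M. u' @ t @ z' \<in> lang R) \<and> (\<forall>t\<in>lang N. v @ t @ y \<in> lang M))"

lemma passed_labels_empty: "passed_labels R {} N u z"
  by (simp add: passed_labels_def)

lemma passed_labels_insert:
  assumes "passed_labels R V N u z" "\<forall>t\<in>lang N. u @ t @ z \<in> lang R"
    "\<alpha> @ \<zeta> \<noteq> []" "\<forall>t\<in>lang M. \<alpha> @ t @ \<zeta> \<in> lang N"
  shows "passed_labels R (insert N V) M (u @ \<alpha>) (\<zeta> @ z)"
  unfolding passed_labels_def
proof
  fix M' assume "M' \<in> insert N V"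
  then consider "M' = N" | "M' \<in> V" by blast
  then show "\<exists>u' v y z'. u @ \<alpha> = u' @ v \<and> \<zeta> @ z = y @ z' \<and> v @ y \<noteq> [] \<and>
    (\<forall>t\<in>lang M'. u' @ t @ z' \<in> lang R) \<and> (\<forall>t\<in>lang M. v @ t @ y \<in> lang M')"
  proof cases
    case 1
    show ?thesis
      by (rule exI[of _ u], rule exI[of _ \<alpha>], rule exI[of _ \<zeta>], rule exI[of _ z])
        (use 1 assms(2-4) in simp)
  next
    case 2
    then obtain u' v y z' where old: "u = u' @ v" "z = y @ z'" "v @ y \<noteq> []"
      "\<forall>t\<in>lang M'. u' @ t @ z' \<in> lang R" "\<forall>t\<in>lang N. v @ t @ y \<in> lang M'"
      using bspec[OF assms(1)[unfolded passed_labels_def] 2] by (elim exE conjE) (rule that)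
    have new: "\<forall>t\<in>lang M. (v @ \<alpha>) @ t @ (\<zeta> @ y) \<in> lang M'"
      using context_compose[OF old(5) assms(4)] .
    show ?thesis
      by (rule exI[of _ u'], rule exI[of _ "v @ \<alpha>"], rule exI[of _ "\<zeta> @ y"], rule exI[of _ z'])
        (use old new in simp)
  qed
qed

lemma pumpable_if_passed:
  assumes "passed_labels R V N u z" "N \<in> V" "x \<in> lang N"
  shows "pumpable R (u @ x @ z)"
proof -
  obtain u' v y z' where p: "u = u' @ v" "z = y @ z'" "v @ y \<noteq> []"
    "\<forall>t\<in>lang N. u' @ t @ z' \<in> lang R" "\<forall>t\<in>lang N. v @ t @ y \<in> lang N"
    using bspec[OF assms(1)[unfolded passed_labels_def] assms(2)] by (elim exE conjE) (rule that)
  show ?thesis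
    unfolding pumpable_def
    by (rule exI[of _ N], rule exI[of _ u'], rule exI[of _ v], rule exI[of _ x],
        rule exI[of _ y], rule exI[of _ z']) (use p assms(3) in simp)
qed

text \<open>Descend along nonempty contexts, recording the labels passed; each step loses at most a
  factor 3 in length, so some label is met twice before the labels are used up.\<close>
lemma pumpable_if_long:
  assumes "N \<in> labels" "x \<in> lang N" "V \<subseteq> labels" "3 ^ (card labels - card V) < length x"
    "\<forall>t\<in>lang N. u @ t @ z \<in> lang R" "passed_labels R V N u z"
  shows "pumpable R (u @ x @ z)"
  using assms
proof (induction "length x" arbitrary: N x V u z rule: less_induct)
  case less
  show ?case
  proof (cases "N \<in> V")
    case True
    show ?thesis using pumpable_if_passed[OF less.prems(6) True less.prems(2)] .
  next
    case False
    have "finite V" using less.prems(3) finite_labels finite_subset by blast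
    have "card V < card labels"
      using less.prems(1,3) False finite_labels by (metis psubsetI psubset_card_mono)
    then have "3 \<le> (3::nat) ^ (card labels - card V)"
      using power_increasing[of 1 "card labels - card V" "3::nat"] by simp
    then have "1 < length x" using less.prems(4) by linarith
    obtain M \<alpha> x' \<zeta> where M: "M \<in> labels" "x = \<alpha> @ x' @ \<zeta>" "\<alpha> @ \<zeta> \<noteq> []"
      "length x \<le> 1 + 2 * length x'" "x' \<in> lang M" "\<forall>t\<in>lang M. \<alpha> @ t @ \<zeta> \<in> lang N"
      using descend[OF less.prems(1,2) \<open>1 < length x\<close>] unfolding decomposes_def
      by (elim bexE exE conjE) (rule that)
    have "card (insert N V) = Suc (card V)" using \<open>finite V\<close> False by simp
    then have long: "3 ^ (card labels - card (insert N V)) < length x'"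
      using three_pow_less_half[of "card labels - Suc (card V)" "length x"] less.prems(4) M(4)
        \<open>card V < card labels\<close> by (simp add: Suc_diff_Suc)
    have "length x' < length x" using M(2,3) by simp
    moreover have "insert N V \<subseteq> labels" using less.prems(1,3) by simp
    ultimately have "pumpable R ((u @ \<alpha>) @ x' @ (\<zeta> @ z))"
      using less.hyps[OF _ M(1,5) _ long context_compose[OF less.prems(5) M(6)]
          passed_labels_insert[OF less.prems(6,5) M(3,6)]]
      by blast
    then show ?thesis using M(2) by simp
  qed
qed

lemma pump_context:
  assumes "\<forall>t\<in>lang M. v @ t @ y \<in> lang M" "w \<in> lang M"
  shows "concat (replicate i v) @ w @ concat (replicate i y) \<in> lang M"
proof (induction i)
  case (Suc i)
  then have "v @ (concat (replicate i v) @ w @ concat (replicate i y)) @ y \<in> lang M"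
    using assms(1) by blast
  then show ?case by (simp add: concat_replicate_append_comm)
qed (use assms(2) in simp)

theorem pumping:
  assumes "N \<in> labels" "x \<in> lang N" "3 ^ card labels < length x"
  shows "\<exists>u v w y z. x = u @ v @ w @ y @ z \<and> v @ y \<noteq> [] \<and>
    length (v @ w @ y) \<le> 3 ^ Suc (card labels) \<and>
    (\<forall>i. u @ concat (replicate i v) @ w @ concat (replicate i y) @ z \<in> lang N)"
proof -
  obtain R u0 x' z0 where R: "R \<in> labels" "x = u0 @ x' @ z0" "x' \<in> lang R"
    "3 ^ card labels < length x'" "length x' \<le> 3 ^ Suc (card labels)"
    "\<forall>t\<in>lang R. u0 @ t @ z0 \<in> lang N"
    using descend_to_window[OF assms] by blast
  have "pumpable R ([] @ x' @ [])"
    by (rule pumpable_if_long[of R x' "{}"]) (use R passed_labels_empty in auto)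
  then obtain M u v w y z where p: "x' = u @ v @ w @ y @ z" "v @ y \<noteq> []" "w \<in> lang M"
    "\<forall>t\<in>lang M. u @ t @ z \<in> lang R" "\<forall>t\<in>lang M. v @ t @ y \<in> lang M"
    unfolding pumpable_def by (elim exE conjE) simp
  have "\<forall>t\<in>lang M. (u0 @ u) @ t @ (z @ z0) \<in> lang N"
    using context_compose[OF R(6) p(4)] .
  then have "\<forall>i. (u0 @ u) @ concat (replicate i v) @ w @ concat (replicate i y) @ (z @ z0) \<in> lang N"
    by (metis bspec pump_context[OF p(5,3)] append_assoc)
  moreover have "length (v @ w @ y) \<le> 3 ^ Suc (card labels)" using p(1) R(5) by simp
  moreover have "x = (u0 @ u) @ v @ w @ y @ (z @ z0)" using R(2) p(1) by simp
  ultimately show ?thesis using p(2) by blast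
qed

end

definition pda_states :: "'x pda_trans \<Rightarrow> nat \<Rightarrow> nat set" where
  "pda_states \<delta> q0 = insert q0 ((\<lambda>(q, a, Z, q', \<beta>). q') ` \<delta>)"

definition pda_stack_words :: "'x pda_trans \<Rightarrow> nat \<Rightarrow> nat list set" where
  "pda_stack_words \<delta> Z0 = {[], [Z0]} \<union> (\<Union>(q, a, Z, q', \<beta>)\<in>\<delta>. set (suffixes \<beta>))"

definition pda_labels :: "'x pda_trans \<Rightarrow> nat \<Rightarrow> nat \<Rightarrow> (nat \<times> nat list \<times> nat option) set" where
  "pda_labels \<delta> q0 Z0 =
     pda_states \<delta> q0 \<times> pda_stack_words \<delta> Z0 \<times> insert None (Some ` pda_states \<delta> q0)"

definition pda_lang :: "'x pda_trans \<Rightarrow> nat set \<Rightarrow> nat \<times> nat list \<times> nat option \<Rightarrow> 'x list set" where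
  "pda_lang \<delta> F = (\<lambda>(p, \<gamma>, qo). {w. pda_derives \<delta> F p \<gamma> qo w})"

lemma finite_pda_labels: "finite \<delta> \<Longrightarrow> finite (pda_labels \<delta> q0 Z0)"
  unfolding pda_labels_def pda_states_def pda_stack_words_def by (auto split: prod.split)

lemma target_in_pda_states: "(q, a, Z, q', \<beta>) \<in> \<delta> \<Longrightarrow> q' \<in> pda_states \<delta> q0"
  unfolding pda_states_def by force

lemma pushed_in_pda_stack_words: "(q, a, Z, q', \<beta>) \<in> \<delta> \<Longrightarrow> \<beta> \<in> pda_stack_words \<delta> Z0"
  unfolding pda_stack_words_def by force

lemma pda_stack_words_tl:
  "Z # \<gamma> \<in> pda_stack_words \<delta> Z0 \<Longrightarrow> \<gamma> \<in> pda_stack_words \<delta> Z0"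
  unfolding pda_stack_words_def by (fastforce dest: suffix_ConsD split: prod.splits)

lemma pda_derives_end_state:
  "pda_derives \<delta> F p \<gamma> (Some q) w \<Longrightarrow> p \<in> pda_states \<delta> q0 \<Longrightarrow> q \<in> pda_states \<delta> q0"
proof (induction p \<gamma> "Some q" w arbitrary: q rule: pda_derives.induct)
  case (pop p a Z q1 \<beta> q' w1 \<gamma> w2)
  then show ?case using target_in_pda_states by metis
qed

lemma pda_labels_pop:
  assumes "(p, a, Z, q1, \<beta>) \<in> \<delta>" "pda_derives \<delta> F q1 \<beta> (Some q') w1"
    "(p, Z # \<gamma>, qo) \<in> pda_labels \<delta> q0 Z0"
  shows "(q1, \<beta>, Some q') \<in> pda_labels \<delta> q0 Z0" "(q', \<gamma>, qo) \<in> pda_labels \<delta> q0 Z0"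
proof -
  have q1: "q1 \<in> pda_states \<delta> q0" using target_in_pda_states[OF assms(1)] .
  then have "q' \<in> pda_states \<delta> q0" using pda_derives_end_state[OF assms(2)] by blast
  then show "(q1, \<beta>, Some q') \<in> pda_labels \<delta> q0 Z0" "(q', \<gamma>, qo) \<in> pda_labels \<delta> q0 Z0"
    using assms(3) q1 pushed_in_pda_stack_words[OF assms(1)] pda_stack_words_tl
    unfolding pda_labels_def by auto
qed

lemma pda_labels_push:
  "(p, a, Z, q1, \<beta>) \<in> \<delta> \<Longrightarrow> (q1, \<beta>, None) \<in> pda_labels \<delta> q0 Z0"
  using target_in_pda_states pushed_in_pda_stack_words unfolding pda_labels_def by blast

text \<open>Each rule of pda_derives contributes at most one letter besides at most two
  subderivations; the longer subderivation is the one to descend into.\<close>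
lemma pda_derives_decomposes:
  assumes "pda_derives \<delta> F p \<gamma> qo x" "(p, \<gamma>, qo) \<in> pda_labels \<delta> q0 Z0" "1 < length x"
  shows "decomposes (pda_labels \<delta> q0 Z0) (pda_lang \<delta> F) (pda_lang \<delta> F (p, \<gamma>, qo)) x"
  using assms
proof (induction rule: pda_derives.induct)
  case (pop p a Z q1 \<beta> q' w1 \<gamma> qo w2)
  let ?a = "list_of_option a" and ?N = "pda_lang \<delta> F (p, Z # \<gamma>, qo)"
  note L = pda_labels_pop[OF pop.hyps(1,2) pop.prems(1)]
  have len: "length (?a @ w1 @ w2) \<le> 1 + length w1 + length w2"
    using length_list_of_option_le[of a] by simp
  have w: "w1 \<in> pda_lang \<delta> F (q1, \<beta>, Some q')" "w2 \<in> pda_lang \<delta> F (q', \<gamma>, qo)"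
    using pop.hyps(2,3) unfolding pda_lang_def by simp_all
  show ?case
  proof (cases "length w2 \<le> length w1")
    case True
    have "\<forall>t\<in>pda_lang \<delta> F (q1, \<beta>, Some q'). ?a @ t @ w2 \<in> ?N"
      using pda_derives.pop[OF pop.hyps(1) _ pop.hyps(3)] unfolding pda_lang_def by simp
    then show ?thesis
      using decomposes_through[where lang = "pda_lang \<delta> F" and u = ?a and z = w2,
          OF L(1) w(1) _ _ _ pop.IH(1)[OF L(1)]]
        len True pop.prems(2) by simp
  next
    case False
    have "\<forall>t\<in>pda_lang \<delta> F (q', \<gamma>, qo). (?a @ w1) @ t @ [] \<in> ?N"
      using pda_derives.pop[OF pop.hyps(1,2)] unfolding pda_lang_def by simp
    then have "decomposes (pda_labels \<delta> q0 Z0) (pda_lang \<delta> F) ?N ((?a @ w1) @ w2 @ [])"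
      using decomposes_through[where lang = "pda_lang \<delta> F" and u = "?a @ w1" and z = "[]",
          OF L(2) w(2) _ _ _ pop.IH(2)[OF L(2)]]
        len False pop.prems(2) by simp
    then show ?thesis by simp
  qed
next
  case (push p a Z q1 \<beta> w \<gamma>)
  let ?a = "list_of_option a"
  note L = pda_labels_push[OF push.hyps(1)]
  have "\<forall>t\<in>pda_lang \<delta> F (q1, \<beta>, None). ?a @ t @ [] \<in> pda_lang \<delta> F (p, Z # \<gamma>, None)"
    using pda_derives.push[OF push.hyps(1)] unfolding pda_lang_def by simp
  moreover have "w \<in> pda_lang \<delta> F (q1, \<beta>, None)"
    using push.hyps(2) unfolding pda_lang_def by simp
  ultimately have "decomposes (pda_labels \<delta> q0 Z0) (pda_lang \<delta> F)
      (pda_lang \<delta> F (p, Z # \<gamma>, None)) (?a @ w @ [])"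
    using decomposes_through[where lang = "pda_lang \<delta> F" and u = ?a and z = "[]",
        OF L _ _ _ _ push.IH[OF L]]
      length_list_of_option_le[of a] push.prems(2) by simp
  then show ?case by simp
qed auto

lemma set_concat_replicate_subset: "set (concat (replicate i v)) \<subseteq> set v"
  by (induction i) auto

theorem context_free_pumping:
  assumes "context_free A L"
  obtains K where "\<And>w. w \<in> L \<Longrightarrow> K < length w \<Longrightarrow> \<exists>u v x y z. w = u @ v @ x @ y @ z \<and>
    v @ y \<noteq> [] \<and> length (v @ x @ y) \<le> K \<and>
    (\<forall>i. u @ concat (replicate i v) @ x @ concat (replicate i y) @ z \<in> L)"
proof -
  obtain \<delta> q0 Z0 F where \<delta>: "finite \<delta>" and L: "L = {w \<in> lists A. pda_accepts \<delta> q0 Z0 F w}"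
    using assms unfolding context_free_def by blast
  interpret descent_system "pda_labels \<delta> q0 Z0" "pda_lang \<delta> F"
  proof
    fix N x assume "N \<in> pda_labels \<delta> q0 Z0" "x \<in> pda_lang \<delta> F N" "1 < length x"
    then show "decomposes (pda_labels \<delta> q0 Z0) (pda_lang \<delta> F) (pda_lang \<delta> F N) x"
      using pda_derives_decomposes unfolding pda_lang_def by (cases N) auto
  qed (rule finite_pda_labels[OF \<delta>])
  let ?root = "(q0, [Z0], None)" and ?n = "card (pda_labels \<delta> q0 Z0)"
  have root: "?root \<in> pda_labels \<delta> q0 Z0"
    unfolding pda_labels_def pda_states_def pda_stack_words_def by simp
  have L_root: "L = {w \<in> lists A. w \<in> pda_lang \<delta> F ?root}"
    unfolding L pda_lang_def by (simp add: pda_accepts_iff_derives)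
  have "\<exists>u v x y z. w = u @ v @ x @ y @ z \<and> v @ y \<noteq> [] \<and> length (v @ x @ y) \<le> 3 ^ Suc ?n \<and>
    (\<forall>i. u @ concat (replicate i v) @ x @ concat (replicate i y) @ z \<in> L)"
    if "w \<in> L" "3 ^ Suc ?n < length w" for w
  proof -
    have "(3::nat) ^ ?n < 3 ^ Suc ?n" by simp
    then have long: "3 ^ ?n < length w" using that(2) by linarith
    have mem: "w \<in> pda_lang \<delta> F ?root" using that(1) L_root by simp
    obtain u v x y z where p: "w = u @ v @ x @ y @ z" "v @ y \<noteq> []"
      "length (v @ x @ y) \<le> 3 ^ Suc ?n"
      "\<forall>i. u @ concat (replicate i v) @ x @ concat (replicate i y) @ z \<in> pda_lang \<delta> F ?root"
      using pumping[OF root mem long] by (elim exE conjE) (rule that)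
    have "u @ concat (replicate i v) @ x @ concat (replicate i y) @ z \<in> lists A" for i
      using that(1) set_concat_replicate_subset[of i v] set_concat_replicate_subset[of i y]
      unfolding L p(1) by auto
    then have "\<forall>i. u @ concat (replicate i v) @ x @ concat (replicate i y) @ z \<in> L"
      using p(4) L_root by simp
    then show ?thesis using p(1-3) by blast
  qed
  then show ?thesis using that by blast
qed

section \<open>Inverse homomorphic images\<close>

definition buffered_state :: "nat \<Rightarrow> 'a::countable list \<Rightarrow> nat" where
  "buffered_state q buf = prod_encode (q, to_nat buf)"

lemma buffered_state_eq_iff [simp]:
  "buffered_state q buf = buffered_state q' buf' \<longleftrightarrow> q = q' \<and> buf = buf'"
  unfolding buffered_state_def by (auto simp: prod_encode_eq)

definition buffers :: "('b \<Rightarrow> 'a list) \<Rightarrow> 'b set \<Rightarrow> 'a list set" where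
  "buffers h B = insert [] (\<Union>b\<in>B. set (suffixes (h b)))"

lemma buffers_appendD: "u @ buf \<in> buffers h B \<Longrightarrow> buf \<in> buffers h B"
  unfolding buffers_def by (auto dest: suffix_appendD)

lemma image_in_buffers: "b \<in> B \<Longrightarrow> h b \<in> buffers h B"
  unfolding buffers_def by force

lemma finite_buffers: "finite B \<Longrightarrow> finite (buffers h B)"
  unfolding buffers_def by simp

text \<open>The standard PDA for an inverse homomorphic image: a letter b is read into a buffer
  holding h b (kept in the state), which the simulated PDA then consumes.\<close>
inductive_set inverse_hom_trans ::
  "'a::countable pda_trans \<Rightarrow> ('b \<Rightarrow> 'a list) \<Rightarrow> 'b set \<Rightarrow> 'b pda_trans"
  for \<delta> h B where
  load: "(q, a, Z, q', \<beta>) \<in> \<delta> \<Longrightarrow> b \<in> B \<Longrightarrow>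
    (buffered_state q ([] :: 'a list), Some b, Z, buffered_state q (h b), [Z])
      \<in> inverse_hom_trans \<delta> h B"
| simulate: "(q, a, Z, q', \<beta>) \<in> \<delta> \<Longrightarrow> list_of_option a @ buf \<in> buffers h B \<Longrightarrow>
    (buffered_state q (list_of_option a @ buf), None, Z, buffered_state q' buf, \<beta>)
      \<in> inverse_hom_trans \<delta> h B"

lemma finite_inverse_hom_trans:
  assumes "finite \<delta>" "finite B"
  shows "finite (inverse_hom_trans \<delta> h B)"
proof -
  let ?load = "\<lambda>((q, a, Z, q', \<beta>), b).
    (buffered_state q ([] :: 'a list), Some b, Z, buffered_state q (h b), [Z])"
  let ?simulate = "\<lambda>((q, a, Z, q', \<beta>), buf). (buffered_state q buf, None, Z,
    buffered_state q' (drop (length (list_of_option a)) buf), \<beta>)"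
  have "inverse_hom_trans \<delta> h B \<subseteq> ?load ` (\<delta> \<times> B) \<union> ?simulate ` (\<delta> \<times> buffers h B)"
  proof
    fix t assume t: "t \<in> inverse_hom_trans \<delta> h B"
    obtain p c Y p' \<gamma> where t_eq: "t = (p, c, Y, p', \<gamma>)" by (cases t)
    with t have "(p, c, Y, p', \<gamma>) \<in> inverse_hom_trans \<delta> h B" by simp
    then show "t \<in> ?load ` (\<delta> \<times> B) \<union> ?simulate ` (\<delta> \<times> buffers h B)"
    proof cases
      case (load q a q' \<beta> b)
      then show ?thesis
        unfolding t_eq by (intro UnI1 image_eqI[where x = "((q, a, Y, q', \<beta>), b)"]) auto
    next
      case (simulate q a q' buf)
      then show ?thesis unfolding t_eq
        by (intro UnI2 image_eqI[where x = "((q, a, Y, q', \<gamma>), list_of_option a @ buf)"]) auto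
    qed
  qed
  then show ?thesis
    using assms finite_buffers by (meson finite_SigmaI finite_UnI finite_imageI finite_subset)
qed

lemma inverse_hom_load_step:
  fixes h :: "'b \<Rightarrow> 'a::countable list"
  assumes "(q, a, Z, q', \<beta>) \<in> \<delta>" "b \<in> B"
  shows "pda_step (inverse_hom_trans \<delta> h B)
    (buffered_state q ([] :: 'a list), b # ws, Z # rest) (buffered_state q (h b), ws, Z # rest)"
  using pda_stepI[OF inverse_hom_trans.load[OF assms], where w = ws and rest = rest] by simp

lemma inverse_hom_simulate_step:
  assumes "(q, a, Z, q', \<beta>) \<in> \<delta>" "list_of_option a @ buf \<in> buffers h B"
  shows "pda_step (inverse_hom_trans \<delta> h B)
    (buffered_state q (list_of_option a @ buf), ws, Z # rest) (buffered_state q' buf, ws, \<beta> @ rest)"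
  using pda_stepI[OF inverse_hom_trans.simulate[OF assms], where w = ws and rest = rest] by simp

lemma concat_map_nonerasing_Nil:
  "\<forall>b\<in>B. h b \<noteq> [] \<Longrightarrow> ws \<in> lists B \<Longrightarrow> concat (map h ws) = [] \<Longrightarrow> ws = []"
  by (cases ws) auto

lemma inverse_hom_run_forward:
  fixes h :: "'b \<Rightarrow> 'a::countable list"
  assumes nonerasing: "\<forall>b\<in>B. h b \<noteq> []"
    and "(pda_step \<delta>)\<^sup>*\<^sup>* (q, buf @ concat (map h ws), st) (f, [], \<gamma>)"
    and "buf \<in> buffers h B" "ws \<in> lists B"
  shows "(pda_step (inverse_hom_trans \<delta> h B))\<^sup>*\<^sup>*
    (buffered_state q buf, ws, st) (buffered_state f ([] :: 'a list), [], \<gamma>)"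
  using assms(2-4)
proof (induction "(q, buf @ concat (map h ws), st)" arbitrary: q buf ws st
    rule: converse_rtranclp_induct)
  case base
  then have "ws = []" using concat_map_nonerasing_Nil[OF nonerasing] by simp
  with base show ?case by auto
next
  case (step c)
  let ?T = "inverse_hom_trans \<delta> h B"
  obtain Z rest a q' \<beta> w' where s: "st = Z # rest" "(q, a, Z, q', \<beta>) \<in> \<delta>"
    "buf @ concat (map h ws) = list_of_option a @ w'" "c = (q', w', \<beta> @ rest)"
    using step.hyps(1) by (rule pda_stepE)
  show ?case
  proof (cases "buf = [] \<and> a \<noteq> None")
    case True
    then obtain x where a: "a = Some x" and buf: "buf = []" by auto
    with s(3) have "concat (map h ws) = x # w'" by simp
    then obtain b ws' hb
      where ws: "ws = b # ws'" and hb: "h b = x # hb" "w' = hb @ concat (map h ws')"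
      using nonerasing step.prems(2) by (cases ws; cases "h (hd ws)") auto
    have b: "b \<in> B" "ws' \<in> lists B" using step.prems(2) ws by auto
    have load: "pda_step ?T (buffered_state q buf, ws, st) (buffered_state q (h b), ws', Z # rest)"
      using inverse_hom_load_step[OF s(2) b(1)] buf ws s(1) by simp
    have "list_of_option a @ hb \<in> buffers h B" using image_in_buffers[OF b(1), of h] a hb(1) by simp
    then have "pda_step ?T
        (buffered_state q (h b), ws', Z # rest) (buffered_state q' hb, ws', \<beta> @ rest)"
      using inverse_hom_simulate_step[OF s(2)] a hb(1) by simp
    moreover have "hb \<in> buffers h B"
      using \<open>list_of_option a @ hb \<in> buffers h B\<close> buffers_appendD by blast
    ultimately show ?thesis
      using load step.hyps(3)[of q' hb ws' "\<beta> @ rest"] s(4) hb(2) b(2)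
      by (meson converse_rtranclp_into_rtranclp)
  next
    case False
    then obtain buf'
      where buf: "buf = list_of_option a @ buf'" and w': "w' = buf' @ concat (map h ws)"
      using s(3) by (cases a; cases buf) auto
    have "pda_step ?T (buffered_state q buf, ws, st) (buffered_state q' buf', ws, \<beta> @ rest)"
      using inverse_hom_simulate_step[OF s(2)] buf step.prems(1) s(1) by simp
    moreover have "buf' \<in> buffers h B" using buffers_appendD step.prems(1) buf by blast
    ultimately show ?thesis
      using step.hyps(3)[of q' buf' ws "\<beta> @ rest"] s(4) w' step.prems(2)
      by (meson converse_rtranclp_into_rtranclp)
  qed
qed

lemma inverse_hom_run_backward:
  fixes h :: "'b \<Rightarrow> 'a::countable list"
  assumes "(pda_step (inverse_hom_trans \<delta> h B))\<^sup>*\<^sup>*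
    (buffered_state q buf, ws, st) (buffered_state f ([] :: 'a list), [], \<gamma>)"
  shows "(pda_step \<delta>)\<^sup>*\<^sup>* (q, buf @ concat (map h ws), st) (f, [], \<gamma>)"
  using assms
proof (induction "(buffered_state q buf, ws, st)" arbitrary: q buf ws st
    rule: converse_rtranclp_induct)
  case base
  then show ?case by simp
next
  case (step c)
  obtain Z rest a p \<beta> ws' where s: "st = Z # rest"
    "(buffered_state q buf, a, Z, p, \<beta>) \<in> inverse_hom_trans \<delta> h B"
    "ws = list_of_option a @ ws'" "c = (p, ws', \<beta> @ rest)"
    using step.hyps(1) by (rule pda_stepE)
  from s(2) show ?case
  proof cases
    case (load q0 a0 q' \<beta>' b)
    then show ?thesis using step.hyps(3)[of q "h b" ws' "[Z] @ rest"] s by simp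
  next
    case (simulate q0 a0 q' buf')
    then have "pda_step \<delta> (q, buf @ concat (map h ws), st) (q', buf' @ concat (map h ws), \<beta> @ rest)"
      using pda_stepI[of q0 a0 Z q' \<beta> \<delta>] s by simp
    then show ?thesis
      using step.hyps(3)[of q' buf' ws "\<beta> @ rest"] s simulate
      by (simp add: converse_rtranclp_into_rtranclp)
  qed
qed

theorem context_free_inverse_hom:
  fixes h :: "'b \<Rightarrow> 'a::countable list"
  assumes cf: "context_free A L" and B: "finite B" and h: "\<forall>b\<in>B. h b \<in> lists A \<and> h b \<noteq> []"
  shows "context_free B {c \<in> lists B. concat (map h c) \<in> L}"
proof -
  obtain \<delta> q0 Z0 F where \<delta>: "finite \<delta>" "finite F"
    and L: "L = {w \<in> lists A. pda_accepts \<delta> q0 Z0 F w}"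
    using cf unfolding context_free_def by blast
  let ?T = "inverse_hom_trans \<delta> h B" and ?F = "(\<lambda>f. buffered_state f ([] :: 'a list)) ` F"
  let ?q0 = "buffered_state q0 ([] :: 'a list)"
  have accepts_iff: "concat (map h c) \<in> L \<longleftrightarrow> pda_accepts ?T ?q0 Z0 ?F c"
    if c: "c \<in> lists B" for c
  proof
    assume "concat (map h c) \<in> L"
    then obtain f \<gamma> where "f \<in> F" "(pda_step \<delta>)\<^sup>*\<^sup>* (q0, [] @ concat (map h c), [Z0]) (f, [], \<gamma>)"
      unfolding L pda_accepts_def by auto
    moreover have "[] \<in> buffers h B" unfolding buffers_def by simp
    ultimately have "(pda_step ?T)\<^sup>*\<^sup>* (?q0, c, [Z0]) (buffered_state f ([] :: 'a list), [], \<gamma>)"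
      using inverse_hom_run_forward[of B h] h c by simp
    then show "pda_accepts ?T ?q0 Z0 ?F c"
      unfolding pda_accepts_def using \<open>f \<in> F\<close> by blast
  next
    assume "pda_accepts ?T ?q0 Z0 ?F c"
    then obtain f \<gamma> where "f \<in> F"
      "(pda_step ?T)\<^sup>*\<^sup>* (?q0, c, [Z0]) (buffered_state f ([] :: 'a list), [], \<gamma>)"
      unfolding pda_accepts_def by auto
    then have "pda_accepts \<delta> q0 Z0 F ([] @ concat (map h c))"
      using inverse_hom_run_backward[of \<delta> h B q0 "[]" c "[Z0]" f \<gamma>]
      unfolding pda_accepts_def by blast
    moreover have "concat (map h c) \<in> lists A" using c h by (induction c) auto
    ultimately show "concat (map h c) \<in> L" unfolding L by simp
  qed
  then have lang: "{c \<in> lists B. concat (map h c) \<in> L} = {c \<in> lists B. pda_accepts ?T ?q0 Z0 ?F c}"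
    by blast
  have letters: "\<forall>t\<in>?T. set_option (fst (snd t)) \<subseteq> B"
    by (auto elim: inverse_hom_trans.cases)
  show ?thesis
    unfolding context_free_def
    by (rule conjI[OF B], rule exI[of _ ?T], rule exI[of _ ?q0], rule exI[of _ Z0],
        rule exI[of _ ?F])
      (use lang letters finite_inverse_hom_trans[OF \<delta>(1) B] \<delta>(2) in simp)
qed

section \<open>Left orders of Z^2\<close>

locale left_ordered_ab_group =
  fixes less :: "'a::ab_group_add \<Rightarrow> 'a \<Rightarrow> bool" (infix \<open>\<lessdot>\<close> 50)
  assumes irrefl: "\<not> a \<lessdot> a"
    and trans: "a \<lessdot> b \<Longrightarrow> b \<lessdot> c \<Longrightarrow> a \<lessdot> c"
    and total: "a \<noteq> b \<Longrightarrow> a \<lessdot> b \<or> b \<lessdot> a"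
    and add_left_mono: "a \<lessdot> b \<Longrightarrow> c + a \<lessdot> c + b"
begin

lemma less_iff_diff_pos: "a \<lessdot> b \<longleftrightarrow> 0 \<lessdot> b - a"
proof
  assume "a \<lessdot> b"
  then show "0 \<lessdot> b - a" using add_left_mono[of a b "- a"] by simp
next
  assume "0 \<lessdot> b - a"
  then show "a \<lessdot> b" using add_left_mono[of 0 "b - a" a] by simp
qed

lemma pos_add: "0 \<lessdot> a \<Longrightarrow> 0 \<lessdot> b \<Longrightarrow> 0 \<lessdot> a + b"
  using add_left_mono[of 0 b a] trans[of 0 a "a + b"] by simp

lemma less_uminus: "a \<lessdot> b \<Longrightarrow> - b \<lessdot> - a"
  using less_iff_diff_pos[of a b] less_iff_diff_pos[of "- b" "- a"] by simp

lemma not_pos_uminus: "0 \<lessdot> a \<Longrightarrow> \<not> 0 \<lessdot> - a"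
  using less_uminus[of 0 a] trans[of 0 "- a" 0] irrefl[of 0] by auto

lemma pos_or_uminus_pos: "a \<noteq> 0 \<Longrightarrow> 0 \<lessdot> a \<or> 0 \<lessdot> - a"
  using total[of a 0] less_uminus[of a 0] by auto

definition least_positive :: "'a \<Rightarrow> bool" where
  "least_positive s \<longleftrightarrow> 0 \<lessdot> s \<and> (\<forall>g. 0 \<lessdot> g \<longrightarrow> g = s \<or> s \<lessdot> g)"

lemma exists_pos_below_finite:
  assumes "\<nexists>s. least_positive s" "0 \<lessdot> e" "finite S"
  shows "\<exists>g. 0 \<lessdot> g \<and> (\<forall>x\<in>S. 0 \<lessdot> x \<longrightarrow> g \<lessdot> x)"
  using assms(3)
proof (induction S rule: finite_induct)
  case empty
  then show ?case using assms(2) by blast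
next
  case (insert x S)
  then obtain g where g: "0 \<lessdot> g" "\<forall>y\<in>S. 0 \<lessdot> y \<longrightarrow> g \<lessdot> y" by blast
  show ?case
  proof (cases "0 \<lessdot> x \<and> \<not> g \<lessdot> x")
    case True
    then have "x = g \<or> x \<lessdot> g" using total by blast
    from True assms(1) obtain h where "0 \<lessdot> h" "h \<noteq> x" "\<not> x \<lessdot> h"
      unfolding least_positive_def by blast
    then have "h \<lessdot> x" using total by blast
    have "h \<lessdot> y" if "y \<in> insert x S" "0 \<lessdot> y" for y
    proof (cases "y = x")
      case False
      then have "g \<lessdot> y" using g that by simp
      then show ?thesis using \<open>h \<lessdot> x\<close> \<open>x = g \<or> x \<lessdot> g\<close> trans by metis
    qed (use \<open>h \<lessdot> x\<close> in simp)
    then show ?thesis using \<open>0 \<lessdot> h\<close> by blast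
  next
    case False
    then show ?thesis using g by blast
  qed
qed

end

definition scale :: "int \<Rightarrow> int \<times> int \<Rightarrow> int \<times> int" where
  "scale k x = (k * fst x, k * snd x)"

lemma scale_simps [simp]:
  "scale 0 x = 0" "scale 1 x = x" "scale k 0 = 0"
  "scale (k + j) x = scale k x + scale j x" "scale (k - j) x = scale k x - scale j x"
  "scale (- k) x = - scale k x" "scale k (- x) = - scale k x"
  "scale k (x + y) = scale k x + scale k y"
  by (auto simp: scale_def algebra_simps zero_prod_def)

definition lin_comb :: "int \<times> int \<Rightarrow> int \<times> int \<Rightarrow> int \<times> int \<Rightarrow> int \<times> int" where
  "lin_comb a b x = scale (fst x) a + scale (snd x) b"

lemma lin_comb_add: "lin_comb a b (x + y) = lin_comb a b x + lin_comb a b y"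
  by (simp add: lin_comb_def)

lemma lin_comb_uminus: "lin_comb a b (- x) = - lin_comb a b x"
  by (simp add: lin_comb_def)

lemma lin_comb_units: "lin_comb (1, 0) (0, 1) x = x"
  by (simp add: lin_comb_def scale_def)

lemma lin_comb_unit_vectors [simp]:
  "lin_comb a b (1, 0) = a" "lin_comb a b (-1, 0) = - a"
  "lin_comb a b (0, 1) = b" "lin_comb a b (0, -1) = - b"
  by (simp_all add: lin_comb_def)

definition norm1 :: "int \<times> int \<Rightarrow> int" where
  "norm1 x = \<bar>fst x\<bar> + \<bar>snd x\<bar>"

lemma finite_norm1_le: "finite {x. norm1 x \<le> K}"
proof (rule finite_subset)
  show "{x. norm1 x \<le> K} \<subseteq> {-K..K} \<times> {-K..K}" unfolding norm1_def by auto
qed simp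

lemma exists_not_multiple: "\<exists>g. \<forall>k. g \<noteq> scale k s"
proof (rule ccontr)
  assume "\<nexists>g. \<forall>k. g \<noteq> scale k s"
  then obtain a b where "(1, 0) = scale a s" "(0, 1) = scale b s" by metis
  then have "a * fst s = 1" "a * snd s = 0" "b * snd s = 1" by (auto simp: scale_def)
  then show False by (metis mult_eq_0_iff zero_neq_one)
qed

lemma lex_neg_iff: "(x :: int \<times> int) < 0 \<longleftrightarrow> 0 < - x"
  by (cases x) (auto simp: less_prod_def)

locale left_ordered_Z2 = left_ordered_ab_group less
  for less :: "int \<times> int \<Rightarrow> int \<times> int \<Rightarrow> bool" (infix \<open>\<lessdot>\<close> 50)
begin

lemma scale_pos:
  assumes x: "0 \<lessdot> x" and "0 < k"
  shows "0 \<lessdot> scale k x"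
proof -
  from \<open>0 < k\<close> have "1 \<le> k" by simp
  then show ?thesis
  proof (induction k rule: int_ge_induct)
    case (step i)
    then show ?case using pos_add[OF step.IH x] by simp
  qed (use x in simp)
qed

lemma scale_less_scale_succ: "0 \<lessdot> s \<Longrightarrow> scale k s \<lessdot> scale (k + 1) s"
  using less_iff_diff_pos[of "scale k s" "scale (k + 1) s"] by simp

lemma exists_above_multiples:
  assumes s: "least_positive s"
  shows "\<exists>u. \<forall>k. scale k s \<lessdot> u"
proof -
  have "0 \<lessdot> s" using s unfolding least_positive_def by blast
  obtain g where g: "\<And>k. g \<noteq> scale k s" using exists_not_multiple by blast
  have up: "scale (k + 1) s \<lessdot> g" if "scale k s \<lessdot> g" for k
  proof (rule ccontr)
    assume "\<not> scale (k + 1) s \<lessdot> g"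
    then have "g \<lessdot> scale (k + 1) s" using total g by blast
    then have "g - scale k s \<lessdot> s"
      using less_iff_diff_pos[of g "scale (k + 1) s"] less_iff_diff_pos[of "g - scale k s" s]
      by (simp add: algebra_simps)
    moreover have "0 \<lessdot> g - scale k s" using that less_iff_diff_pos by blast
    moreover have "g - scale k s \<noteq> s" using g[of "k + 1"] by (auto simp: algebra_simps)
    ultimately show False using s irrefl trans unfolding least_positive_def by blast
  qed
  have down: "scale (k - 1) s \<lessdot> g" if "scale k s \<lessdot> g" for k
    using scale_less_scale_succ[OF \<open>0 \<lessdot> s\<close>, of "k - 1"] that trans by simp
  show ?thesis
  proof (cases "\<exists>k0. scale k0 s \<lessdot> g")
    case True
    then obtain k0 where "scale k0 s \<lessdot> g" by blast
    have "scale k s \<lessdot> g" for k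
    proof (induction k rule: int_induct[where k = k0])
      case base
      then show ?case by fact
    next
      case (step1 i)
      then show ?case using up by blast
    next
      case (step2 i)
      then show ?case using down by blast
    qed
    then show ?thesis by blast
  next
    case False
    then have "g \<lessdot> scale (- k) s" for k using total g by blast
    then have "scale k s \<lessdot> - g" for k using less_uminus[of g "scale (- k) s"] by simp
    then show ?thesis by blast
  qed
qed

text \<open>Here < on int \<times> int is the lexicographic order of HOL-Library.Product_Lexorder.\<close>
lemma lin_comb_pos_iff_lex:
  assumes s: "least_positive s" and u: "\<forall>k. scale k s \<lessdot> u"
  shows "0 \<lessdot> lin_comb u s x \<longleftrightarrow> 0 < x"
proof -
  have "0 \<lessdot> s" using s unfolding least_positive_def by blast
  have "0 \<lessdot> u" using u by (metis scale_simps(1))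
  have lex: "0 \<lessdot> lin_comb u s x" if "0 < x" for x
  proof (cases "0 < fst x")
    case True
    have "0 \<lessdot> u + scale (snd x) s"
      using u[rule_format, of "- snd x"] less_iff_diff_pos[of "scale (- snd x) s" u] by simp
    moreover have eq: "lin_comb u s x = scale (fst x - 1) u + (u + scale (snd x) s)"
      by (simp add: lin_comb_def algebra_simps)
    ultimately show ?thesis
    proof (cases "fst x = 1")
      case False
      then have "0 \<lessdot> scale (fst x - 1) u"
        using scale_pos[OF \<open>0 \<lessdot> u\<close>, of "fst x - 1"] True by simp
      then show ?thesis unfolding eq using pos_add \<open>0 \<lessdot> u + scale (snd x) s\<close> by blast
    qed (simp add: eq)
  next
    case False
    then have "fst x = 0" "0 < snd x" using that by (auto simp: less_prod_def)
    then show ?thesis using scale_pos[OF \<open>0 \<lessdot> s\<close>] by (simp add: lin_comb_def)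
  qed
  show ?thesis
  proof
    assume pos: "0 \<lessdot> lin_comb u s x"
    show "0 < x"
    proof (rule ccontr)
      assume "\<not> 0 < x"
      moreover have "x \<noteq> 0" using pos irrefl[of 0] by (auto simp: lin_comb_def)
      ultimately have "0 < - x" using lex_neg_iff by (metis neq_iff)
      then show False using lex not_pos_uminus[OF pos] lin_comb_uminus by metis
    qed
  qed (rule lex)
qed

lemma exists_pos_far_unsplittable:
  assumes "\<nexists>s. least_positive s"
  shows "\<exists>g. 0 \<lessdot> g \<and> K < norm1 g \<and> (\<forall>d. d \<noteq> 0 \<and> norm1 d \<le> K \<longrightarrow> \<not> (0 \<lessdot> g - d \<and> 0 \<lessdot> g + d))"
proof -
  have "(1, 0) \<noteq> (0 :: int \<times> int)" by (simp add: zero_prod_def)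
  then obtain e where "0 \<lessdot> e" using pos_or_uminus_pos by blast
  then obtain g where g: "0 \<lessdot> g" "\<And>x. norm1 x \<le> K \<Longrightarrow> 0 \<lessdot> x \<Longrightarrow> g \<lessdot> x"
    using exists_pos_below_finite[OF assms _ finite_norm1_le, of e K] by auto
  have "K < norm1 g"
  proof (rule ccontr)
    assume "\<not> K < norm1 g"
    then show False using g(2)[of g] g(1) irrefl[of g] by simp
  qed
  moreover have "\<not> (0 \<lessdot> g - d \<and> 0 \<lessdot> g + d)" if "d \<noteq> 0" "norm1 d \<le> K" for d
  proof (cases "0 \<lessdot> d")
    case True
    then have "0 \<lessdot> d - g" using g(2) that(2) less_iff_diff_pos by blast
    then show ?thesis using not_pos_uminus[of "d - g"] by simp
  next
    case False
    then have "0 \<lessdot> - d" using pos_or_uminus_pos that(1) by blast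
    moreover have "norm1 (- d) \<le> K" using that(2) by (simp add: norm1_def)
    ultimately have "0 \<lessdot> - d - g" using g(2) less_iff_diff_pos by blast
    moreover have "g + d = - (- d - g)" by simp
    ultimately show ?thesis using not_pos_uminus[of "- d - g"] by metis
  qed
  ultimately show ?thesis using g(1) by blast
qed

end

section \<open>Lattice path languages\<close>

datatype dir = East | West | North | South

primrec step :: "dir \<Rightarrow> int \<times> int" where
  "step East = (1, 0)"
| "step West = (-1, 0)"
| "step North = (0, 1)"
| "step South = (0, -1)"

definition path_end :: "dir list \<Rightarrow> int \<times> int" where
  "path_end c = sum_list (map step c)"

lemma path_end_simps [simp]:
  "path_end [] = 0" "path_end (d # c) = step d + path_end c"
  "path_end (c @ c') = path_end c + path_end c'"
  by (simp_all add: path_end_def)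

lemma UNIV_dir: "UNIV = {East, West, North, South}"
  using dir.exhaust by auto

lemma finite_UNIV_dir: "finite (UNIV :: dir set)"
  by (simp add: UNIV_dir)

lemma path_language_pumping:
  assumes "context_free UNIV {c. P (path_end c)}"
  obtains K where "\<And>w. P (path_end w) \<Longrightarrow> K < length w \<Longrightarrow> \<exists>u v x y z. w = u @ v @ x @ y @ z \<and>
    v @ y \<noteq> [] \<and> length (v @ x @ y) \<le> K \<and>
    P (path_end w - path_end (v @ y)) \<and> P (path_end w + path_end (v @ y))"
proof -
  obtain K where K: "\<And>w. w \<in> {c. P (path_end c)} \<Longrightarrow> K < length w \<Longrightarrow>
    \<exists>u v x y z. w = u @ v @ x @ y @ z \<and> v @ y \<noteq> [] \<and> length (v @ x @ y) \<le> K \<and>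
    (\<forall>i. u @ concat (replicate i v) @ x @ concat (replicate i y) @ z \<in> {c. P (path_end c)})"
    using context_free_pumping[OF assms] by metis
  have "\<exists>u v x y z. w = u @ v @ x @ y @ z \<and> v @ y \<noteq> [] \<and> length (v @ x @ y) \<le> K \<and>
    P (path_end w - path_end (v @ y)) \<and> P (path_end w + path_end (v @ y))"
    if w: "P (path_end w)" "K < length w" for w
  proof -
    from w(1) have "w \<in> {c. P (path_end c)}" by simp
    obtain u v x y z where p: "w = u @ v @ x @ y @ z" "v @ y \<noteq> []" "length (v @ x @ y) \<le> K"
      "\<forall>i. u @ concat (replicate i v) @ x @ concat (replicate i y) @ z \<in> {c. P (path_end c)}"
      using K[OF \<open>w \<in> _\<close> w(2)] by (elim exE conjE) (rule that)
    have "P (path_end w - path_end (v @ y))"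
      using p(4)[rule_format, of 0] p(1) by (simp add: algebra_simps)
    moreover have "P (path_end w + path_end (v @ y))"
      using p(4)[rule_format, of 2] p(1) by (simp add: numeral_2_eq_2 algebra_simps)
    ultimately show ?thesis using p(1-3) by blast
  qed
  then show ?thesis using that by blast
qed

definition monotone_path :: "dir list \<Rightarrow> bool" where
  "monotone_path c \<longleftrightarrow> \<not> (East \<in> set c \<and> West \<in> set c) \<and> \<not> (North \<in> set c \<and> South \<in> set c)"

lemma monotone_path_subset: "monotone_path c \<Longrightarrow> set c' \<subseteq> set c \<Longrightarrow> monotone_path c'"
  unfolding monotone_path_def by blast

lemma path_end_counts:
  "path_end c = (int (count_list c East) - int (count_list c West),
    int (count_list c North) - int (count_list c South))"
proof (induction c)
  case (Cons d c)
  then show ?case by (cases d) simp_all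
qed (simp add: zero_prod_def)

lemma length_counts:
  "length c = count_list c East + count_list c West + count_list c North + count_list c South"
proof (induction c)
  case (Cons d c)
  then show ?case by (cases d) simp_all
qed simp

lemma norm1_path_end_monotone:
  assumes "monotone_path c"
  shows "norm1 (path_end c) = int (length c)"
proof -
  have "count_list c East = 0 \<or> count_list c West = 0"
    "count_list c North = 0 \<or> count_list c South = 0"
    using assms unfolding monotone_path_def by (auto simp: count_list_0_iff)
  then show ?thesis unfolding norm1_def path_end_counts length_counts[of c] by auto
qed

lemma path_end_monotone_nonzero:
  assumes "monotone_path c" "c \<noteq> []"
  shows "path_end c \<noteq> 0"
  using norm1_path_end_monotone[OF assms(1)] assms(2) by (auto simp: norm1_def)

definition direct_path :: "int \<times> int \<Rightarrow> dir list" where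
  "direct_path g = replicate (nat \<bar>fst g\<bar>) (if 0 \<le> fst g then East else West) @
     replicate (nat \<bar>snd g\<bar>) (if 0 \<le> snd g then North else South)"

lemma count_list_replicate: "count_list (replicate n x) y = (if x = y then n else 0)"
  by (induction n) auto

lemma path_end_direct_path: "path_end (direct_path g) = g"
  unfolding path_end_counts direct_path_def by (simp add: count_list_replicate prod_eq_iff)

lemma monotone_direct_path: "monotone_path (direct_path g)"
  unfolding monotone_path_def direct_path_def by auto

lemma length_direct_path: "int (length (direct_path g)) = norm1 g"
  using norm1_path_end_monotone[OF monotone_direct_path] path_end_direct_path by simp

context left_ordered_Z2
begin

theorem not_context_free_positive_paths:
  assumes "\<nexists>s. least_positive s"
  shows "\<not> context_free UNIV {c. 0 \<lessdot> path_end c}"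
proof
  assume "context_free UNIV {c. 0 \<lessdot> path_end c}"
  then obtain K where K: "\<And>w. 0 \<lessdot> path_end w \<Longrightarrow> K < length w \<Longrightarrow> \<exists>u v x y z.
    w = u @ v @ x @ y @ z \<and> v @ y \<noteq> [] \<and> length (v @ x @ y) \<le> K \<and>
    0 \<lessdot> path_end w - path_end (v @ y) \<and> 0 \<lessdot> path_end w + path_end (v @ y)"
    using path_language_pumping by metis
  obtain g where g: "0 \<lessdot> g" "int K < norm1 g"
    "\<And>d. d \<noteq> 0 \<Longrightarrow> norm1 d \<le> int K \<Longrightarrow> \<not> (0 \<lessdot> g - d \<and> 0 \<lessdot> g + d)"
    using exists_pos_far_unsplittable[OF assms, of "int K"] by blast
  let ?w = "direct_path g"
  have long: "K < length ?w" using g(2) length_direct_path[of g] by linarith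
  have pos: "0 \<lessdot> path_end ?w" using g(1) by (simp add: path_end_direct_path)
  obtain u v x y z where p: "?w = u @ v @ x @ y @ z" "v @ y \<noteq> []"
    "length (v @ x @ y) \<le> K" "0 \<lessdot> g - path_end (v @ y)" "0 \<lessdot> g + path_end (v @ y)"
    using K[OF pos long] unfolding path_end_direct_path by (elim exE conjE) (rule that)
  define vy where "vy = v @ y"
  have "set vy \<subseteq> set ?w" "vy \<noteq> []" "length vy \<le> K" using p(1-3) unfolding vy_def by auto
  then have "monotone_path vy" using monotone_path_subset monotone_direct_path by blast
  then have "path_end vy \<noteq> 0" "norm1 (path_end vy) \<le> int K"
    using path_end_monotone_nonzero \<open>vy \<noteq> []\<close> norm1_path_end_monotone \<open>length vy \<le> K\<close> by auto
  then show False using g(3) p(4,5) unfolding vy_def by blast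
qed

end

lemma nth_append_notin_right: "i < length (xs @ ys) \<Longrightarrow> (xs @ ys) ! i \<notin> set ys \<Longrightarrow> i < length xs"
  using nth_mem[of "i - length xs" ys] by (auto simp: nth_append split: if_splits)

lemma nth_append_notin_left: "(xs @ ys) ! i \<notin> set xs \<Longrightarrow> length xs \<le> i"
  using nth_mem[of i xs] by (auto simp: nth_append split: if_splits)

lemma factor_across_middle:
  assumes w: "u @ s @ z = p @ q @ r"
    and a: "a \<in> set s" "a \<notin> set q" "a \<notin> set r" and b: "b \<in> set s" "b \<notin> set p" "b \<notin> set q"
  shows "length q < length s"
proof -
  obtain i j where ij: "i < length s" "s ! i = a" "j < length s" "s ! j = b"
    using a(1) b(1) by (auto simp: in_set_conv_nth)
  have at: "(p @ q @ r) ! (length u + k) = s ! k" if "k < length s" for k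
    using that unfolding w[symmetric] by (simp add: nth_append)
  have len: "length u + k < length (p @ q @ r)" if "k < length s" for k
    using that arg_cong[OF w, of length] by simp
  have "length u + i < length p"
    using nth_append_notin_right[OF len[OF ij(1)]] at[OF ij(1)] ij(2) a(2,3) by simp
  moreover have "length (p @ q) \<le> length u + j"
    using nth_append_notin_left[of "p @ q" r] at[OF ij(3)] ij(4) b(2,3) by simp
  ultimately show ?thesis using ij(1,3) by simp
qed

lemma lex_pos_unsplittable:
  assumes "d \<noteq> 0"
  shows "\<not> ((0 :: int \<times> int) < (0, 1) - d \<and> 0 < (0, 1) + d)"
  using assms by (cases d) (auto simp: less_prod_def zero_prod_def)

theorem not_context_free_lex_positive_paths:
  "\<not> context_free UNIV {c. (0 :: int \<times> int) < path_end c}"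
proof
  assume "context_free UNIV {c. (0 :: int \<times> int) < path_end c}"
  then obtain K where K: "\<And>w. 0 < path_end w \<Longrightarrow> K < length w \<Longrightarrow> \<exists>u v x y z.
    w = u @ v @ x @ y @ z \<and> v @ y \<noteq> [] \<and> length (v @ x @ y) \<le> K \<and>
    0 < path_end w - path_end (v @ y) \<and> 0 < path_end w + path_end (v @ y)"
    using path_language_pumping by metis
  define m where "m = Suc K"
  define w
    where "w = replicate m East @ replicate m South @ replicate m West @ replicate (Suc m) North"
  have end_w: "path_end w = (0, 1)"
    unfolding w_def path_end_counts by (simp add: count_list_replicate)
  have pos: "0 < path_end w" unfolding end_w by (simp add: zero_prod_def)
  have long: "K < length w" unfolding w_def m_def by simp
  obtain u v x y z where p: "w = u @ v @ x @ y @ z" "v @ y \<noteq> []" "length (v @ x @ y) \<le> K"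
    "0 < (0, 1) - path_end (v @ y)" "0 < (0, 1) + path_end (v @ y)"
    using K[OF pos long] unfolding end_w by (elim exE conjE) (rule that)
  have "monotone_path (v @ x @ y)"
    unfolding monotone_path_def
  proof
    show "\<not> (East \<in> set (v @ x @ y) \<and> West \<in> set (v @ x @ y))"
      using factor_across_middle[of u "v @ x @ y" z "replicate m East" "replicate m South"
          "replicate m West @ replicate (Suc m) North" East West] p(1,3)
      unfolding w_def m_def by auto
    show "\<not> (North \<in> set (v @ x @ y) \<and> South \<in> set (v @ x @ y))"
      using factor_across_middle[of u "v @ x @ y" z "replicate m East @ replicate m South"
          "replicate m West" "replicate (Suc m) North" South North] p(1,3)
      unfolding w_def m_def by auto
  qed
  then have "monotone_path (v @ y)" by (rule monotone_path_subset) auto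
  then have "path_end (v @ y) \<noteq> 0" using path_end_monotone_nonzero p(2) by blast
  then show False using lex_pos_unsplittable p(4,5) by blast
qed

context left_ordered_Z2
begin

theorem exists_non_context_free_path_language:
  "\<exists>a b. a \<noteq> 0 \<and> b \<noteq> 0 \<and> \<not> context_free UNIV {c. 0 \<lessdot> lin_comb a b (path_end c)}"
proof (cases "\<exists>s. least_positive s")
  case True
  then obtain s where s: "least_positive s" by blast
  then obtain u where u: "\<forall>k. scale k s \<lessdot> u" using exists_above_multiples by blast
  have "0 \<lessdot> s" "0 \<lessdot> u" using s u[rule_format, of 0] unfolding least_positive_def by auto
  then have nonzero: "u \<noteq> 0" "s \<noteq> 0" using irrefl[of 0] by auto
  have lex: "{c. 0 \<lessdot> lin_comb u s (path_end c)} = {c. 0 < path_end c}"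
    using lin_comb_pos_iff_lex[OF s u] by simp
  show ?thesis
    by (rule exI[of _ u], rule exI[of _ s])
      (use nonzero lex not_context_free_lex_positive_paths in simp)
next
  case False
  have nonzero: "(1, 0) \<noteq> (0 :: int \<times> int)" "(0, 1) \<noteq> (0 :: int \<times> int)"
    by (simp_all add: zero_prod_def)
  show ?thesis
    by (rule exI[of _ "(1, 0)"], rule exI[of _ "(0, 1)"])
      (use nonzero not_context_free_positive_paths[OF False] in \<open>simp add: lin_comb_units\<close>)
qed

end

section \<open>Groups containing Z^2\<close>

lemma Z2_simps [simp]:
  "carrier Z2 = UNIV" "x \<otimes>\<^bsub>Z2\<^esub> y = x + y" "\<one>\<^bsub>Z2\<^esub> = 0"
  by (auto simp: Z2_def zero_prod_def split: prod.split)

lemma group_Z2: "group Z2"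
proof (rule groupI)
  fix x :: "int \<times> int"
  show "\<exists>y\<in>carrier Z2. y \<otimes>\<^bsub>Z2\<^esub> x = \<one>\<^bsub>Z2\<^esub>" by (rule bexI[of _ "- x"]) simp_all
qed (simp_all add: algebra_simps)

lemma lin_comb_hom: "lin_comb a b \<in> hom Z2 Z2"
  by (rule homI) (simp_all add: lin_comb_add)

lemma left_order_pullback:
  assumes "\<psi> \<in> hom K G" "inj_on \<psi> (carrier K)" "left_order G lt"
  shows "left_order K (\<lambda>x y. lt (\<psi> x) (\<psi> y))"
  using assms hom_in_carrier[OF assms(1)] unfolding left_order_def inj_on_def
  by (simp add: hom_mult[OF assms(1)]) blast

lemma left_order_Z2_imp_left_ordered_Z2:
  assumes "left_order Z2 lt"
  shows "left_ordered_Z2 lt"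
  using assms unfolding left_order_def Z2_simps by unfold_locales blast+

lemma word_eval_closed:
  assumes "monoid G" "f ` A \<subseteq> carrier G" "xs \<in> lists A"
  shows "word_eval G f xs \<in> carrier G"
  using assms(3) by (induction xs) (use assms(1,2) in \<open>auto simp: word_eval_def monoid.m_closed\<close>)

lemma word_eval_append:
  assumes "monoid G" "f ` A \<subseteq> carrier G" "xs \<in> lists A" "ys \<in> lists A"
  shows "word_eval G f (xs @ ys) = word_eval G f xs \<otimes>\<^bsub>G\<^esub> word_eval G f ys"
  using assms(3)
proof (induction xs)
  case Nil
  then show ?case using word_eval_closed[OF assms(1,2,4)] assms(1)
    by (simp add: word_eval_def monoid.l_one)
next
  case (Cons x xs)
  then have "f x \<in> carrier G" using assms(2) by auto
  with Cons show ?case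
    using word_eval_closed[OF assms(1,2)] assms(1,4) by (simp add: word_eval_def monoid.m_assoc)
qed

lemma word_eval_concat_map:
  assumes G: "group G" "f ` A \<subseteq> carrier G" and \<chi>: "\<chi> \<in> hom Z2 G"
    and h: "\<And>d. h d \<in> lists A" "\<And>d. word_eval G f (h d) = \<chi> (step d)"
  shows "word_eval G f (concat (map h c)) = \<chi> (path_end c)"
proof (induction c)
  case Nil
  show ?case using hom_one[OF \<chi> group_Z2 G(1)] by (simp add: word_eval_def)
next
  case (Cons d c)
  have "concat (map h c) \<in> lists A" using h(1) by (induction c) auto
  then show ?case
    using word_eval_append[OF group.is_monoid[OF G(1)] G(2) h(1)] Cons h(2) hom_mult[OF \<chi>]
    by simp
qed

lemma cf_preimage_left_order_imp_context_free_paths: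
  assumes G: "group G" and lt: "cf_preimage_left_order G lt" and \<chi>: "\<chi> \<in> hom Z2 G"
    and nontrivial: "\<And>d. \<chi> (step d) \<noteq> \<one>\<^bsub>G\<^esub>"
  shows "context_free UNIV {c. lt \<one>\<^bsub>G\<^esub> (\<chi> (path_end c))}"
proof -
  obtain A :: "nat set" and f where gen: "finite_generating_set G A f"
    and cf: "context_free A {w \<in> lists A. word_eval G f w \<in> positive_cone G lt}"
    using lt unfolding cf_preimage_left_order_def by blast
  have fA: "f ` A \<subseteq> carrier G" using gen unfolding finite_generating_set_def by blast
  have "\<exists>w\<in>lists A. word_eval G f w = \<chi> (step d)" for d
    using gen hom_in_carrier[OF \<chi>] unfolding finite_generating_set_def by simp
  then obtain h where h: "\<And>d. h d \<in> lists A" "\<And>d. word_eval G f (h d) = \<chi> (step d)"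
    by metis
  have "h d \<noteq> []" for d using h(2)[of d] nontrivial[of d] by (auto simp: word_eval_def)
  then have "context_free UNIV {c \<in> lists UNIV. concat (map h c) \<in>
      {w \<in> lists A. word_eval G f w \<in> positive_cone G lt}}"
    using context_free_inverse_hom[OF cf finite_UNIV_dir] h(1) by blast
  moreover have "concat (map h c) \<in> lists A" for c using h(1) by (induction c) auto
  ultimately show ?thesis
    using word_eval_concat_map[OF G fA \<chi> h] hom_in_carrier[OF \<chi>]
    unfolding positive_cone_def by simp
qed

theorem no_cf_preimage_left_order_containing_Z2:
  assumes G: "group G" and lt: "cf_preimage_left_order G lt" and \<psi>: "\<psi> \<in> hom Z2 G" "inj \<psi>"
  shows False
proof -
  let ?lt = "\<lambda>x y. lt (\<psi> x) (\<psi> y)"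
  have "left_order G lt" using lt unfolding cf_preimage_left_order_def by blast
  then interpret left_ordered_Z2 ?lt
    using left_order_pullback[OF \<psi>(1)] \<psi>(2) left_order_Z2_imp_left_ordered_Z2 by simp
  obtain a b where ab: "a \<noteq> 0" "b \<noteq> 0"
    and not_cf: "\<not> context_free UNIV {c. ?lt 0 (lin_comb a b (path_end c))}"
    using exists_non_context_free_path_language by blast
  have \<psi>0: "\<psi> 0 = \<one>\<^bsub>G\<^esub>" using hom_one[OF \<psi>(1) group_Z2 G] by simp
  have hom: "\<psi> \<circ> lin_comb a b \<in> hom Z2 G" using hom_compose[OF lin_comb_hom \<psi>(1)] .
  have nontrivial: "(\<psi> \<circ> lin_comb a b) (step d) \<noteq> \<one>\<^bsub>G\<^esub>" for d
  proof -
    have "lin_comb a b (step d) \<noteq> 0" using ab by (cases d) simp_all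
    then show ?thesis using \<psi>0 inj_eq[OF \<psi>(2), of _ 0] by simp
  qed
  have "context_free UNIV {c. lt \<one>\<^bsub>G\<^esub> ((\<psi> \<circ> lin_comb a b) (path_end c))}"
    by (rule cf_preimage_left_order_imp_context_free_paths[OF G lt hom nontrivial])
  then show False using not_cf \<psi>0 by simp
qed

theorem propositionA6:
  shows "(\<forall>lt. \<not> cf_preimage_left_order Z2 lt) \<and>
         (\<forall>(G :: ('g, 'b) monoid_scheme) lt.
             group G \<and> finitely_generated G \<and> cf_preimage_left_order G lt \<longrightarrow>
             \<not> (\<exists>H. subgroup H G \<and> G\<lparr>carrier := H\<rparr> \<cong> Z2))"
proof (intro conjI allI impI notI)
  fix lt assume "cf_preimage_left_order Z2 lt"
  then show False
    using no_cf_preimage_left_order_containing_Z2[OF group_Z2] iso_imp_homomorphism[OF id_iso]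
    by (metis id_apply inj_on_id)
next
  fix G :: "('g, 'b) monoid_scheme" and lt
  assume G: "group G \<and> finitely_generated G \<and> cf_preimage_left_order G lt"
    and "\<exists>H. subgroup H G \<and> G\<lparr>carrier := H\<rparr> \<cong> Z2"
  then obtain H \<phi> where H: "subgroup H G" and \<phi>: "\<phi> \<in> iso (G\<lparr>carrier := H\<rparr>) Z2"
    unfolding is_iso_def by blast
  let ?\<psi> = "inv_into H \<phi>"
  have "?\<psi> \<in> iso Z2 (G\<lparr>carrier := H\<rparr>)"
    using group.iso_set_sym[OF group.subgroup_imp_group[OF _ H] \<phi>] G by simp
  then have "?\<psi> \<in> hom Z2 G" "inj ?\<psi>"
    using subgroup.subset[OF H] unfolding iso_def hom_def bij_betw_def by auto
  then show False using no_cf_preimage_left_order_containing_Z2 G by blast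
qed

end
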